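(* Let $m\ge2$, $n\ge1$, and let $\mathcal{A}\in\mathbb{R}_+^{[m,n]}$ be weakly irreducible. Let $k$ be any fixed positive integer, and let $\mathcal{S}_k$ be the set of tensors $\mathcal{B}\in\mathbb{R}_+^{[k,n]}$ with $r_i(\mathcal{B})\neq0$ for all $i\in[n]$. Then the maximum and minimum below are attained and \[\max_{\mathcal{B}\in\mathcal{S}_k}\ \min_{i\in[n]}\frac{r_i(\mathcal{A}\mathcal{B})}{(r_i(\mathcal{B}))^{m-1}}=\rho(\mathcal{A})=\min_{\mathcal{B}\in\mathcal{S}_k}\ \max_{i\in[n]}\frac{r_i(\mathcal{A}\mathcal{B})}{(r_i(\mathcal{B}))^{m-1}}.\]
   Context: $[n]=\{1,\ldots,n\}$. $\mathbb{R}_+^{[m,n]}$ denotes the set of order $m$, dimension $n$ tensors $\mathcal{A}=(a_{i_1\cdots i_m})$, $i_j\in[n]$, with nonnegative real entries (for order $1$: nonnegative vectors). A tensor $\mathcal{A}\in\mathbb{R}_+^{[m,n]}$ is called weakly irreducible (as defined in this paper) if for every nonempty proper subset $I\subset[n]$ there exist $i_1,\ldots,i_m$ with $a_{i_1i_2\cdots i_m}>0$, $i_1\in I$ and $i_j\in[n]\setminus I$ for all $j\in\{2,\ldots,m\}$. For a tensor $\mathcal{T}=(t_{i_1\cdots i_p})$ of order $p$ and dimension $n$, $r_i(\mathcal{T})=\sum_{i_2,\ldots,i_p=1}^n|t_{ii_2\cdots i_p}|$ (for $p=1$, $r_i(\mathcal{T})=|t_i|$). General product: for $\mathcal{A}$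 of order $m\ge2$ and $\mathcal{B}$ of order $k\ge1$, $\mathcal{A}\mathcal{B}=(c_{i\alpha_1\cdots\alpha_{m-1}})$ is the order $(m-1)(k-1)+1$, dimension $n$ tensor with $c_{i\alpha_1\cdots\alpha_{m-1}}=\sum_{i_2,\ldots,i_m=1}^n a_{ii_2\cdots i_m}b_{i_2\alpha_1}\cdots b_{i_m\alpha_{m-1}}$, $i\in[n]$, $\alpha_j\in[n]^{k-1}$ (where $b_{j\alpha}$ with $\alpha=(j_2,\ldots,j_k)$ means $b_{jj_2\cdots j_k}$). Eigenvalues: $\lambda\in\mathbb{C}$ is an eigenvalue of $\mathcal{A}$ if there is a nonzero $x\in\mathbb{C}^n$ with $\sum_{i_2,\ldots,i_m=1}^n a_{ii_2\cdots i_m}x_{i_2}\cdots x_{i_m}=\lambda x_i^{m-1}$ for all $i\in[n]$; $\rho(\mathcal{A})$ is the maximum modulus of the eigenvalues of $\mathcal{A}$. *)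

theory Defs
  imports Complex_Main
begin

text \<open>Tensors of order p and dimension n are modelled as functions from index lists
  to reals; indices are 0-based, i.e. [n] is rendered as {..<n}. Only entries at index
  lists of length p with all entries < n are relevant.\<close>

definition tensor_idx :: "nat \<Rightarrow> nat \<Rightarrow> nat list set" where
  "tensor_idx p n = {xs. length xs = p \<and> set xs \<subseteq> {..<n}}"

definition nonneg_tensor :: "nat \<Rightarrow> nat \<Rightarrow> (nat list \<Rightarrow> real) \<Rightarrow> bool" where
  "nonneg_tensor p n T \<longleftrightarrow> (\<forall>xs\<in>tensor_idx p n. 0 \<le> T xs)"

definition row_sum :: "nat \<Rightarrow> nat \<Rightarrow> (nat list \<Rightarrow> real) \<Rightarrow> nat \<Rightarrow> real" where
  "row_sum p n T i = (\<Sum>\<alpha>\<in>tensor_idx (p - 1) n. \<bar>T (i # \<alpha>)\<bar>)"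

text \<open>General product AB of A (order m) and B (order k): an entry
  c_{i \<alpha>_1 ... \<alpha>_{m-1}} is stored at the index list i # \<alpha>_1 @ ... @ \<alpha>_{m-1},
  where each \<alpha>_j has length k-1.\<close>
definition tensor_prod :: "nat \<Rightarrow> nat \<Rightarrow> nat \<Rightarrow> (nat list \<Rightarrow> real) \<Rightarrow> (nat list \<Rightarrow> real)
    \<Rightarrow> nat list \<Rightarrow> real" where
  "tensor_prod m k n A B xs =
     (\<Sum>is\<in>tensor_idx (m - 1) n.
        A (hd xs # is) *
        (\<Prod>j<m - 1. B (is ! j # take (k - 1) (drop (j * (k - 1)) (tl xs)))))"

definition tensor_eigenvalue :: "nat \<Rightarrow> nat \<Rightarrow> (nat list \<Rightarrow> real) \<Rightarrow> complex \<Rightarrow> bool" where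
  "tensor_eigenvalue m n A lam \<longleftrightarrow>
     (\<exists>x :: nat \<Rightarrow> complex. (\<exists>i<n. x i \<noteq> 0) \<and>
        (\<forall>i<n. (\<Sum>is\<in>tensor_idx (m - 1) n. complex_of_real (A (i # is)) * (\<Prod>j<m - 1. x (is ! j)))
               = lam * x i ^ (m - 1)))"

definition spectral_radius :: "nat \<Rightarrow> nat \<Rightarrow> (nat list \<Rightarrow> real) \<Rightarrow> real" where
  "spectral_radius m n A = Sup {cmod lam | lam. tensor_eigenvalue m n A lam}"

definition weakly_irreducible :: "nat \<Rightarrow> nat \<Rightarrow> (nat list \<Rightarrow> real) \<Rightarrow> bool" where
  "weakly_irreducible m n A \<longleftrightarrow>
     (\<forall>I. I \<noteq> {} \<and> I \<subset> {..<n} \<longrightarrow>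
        (\<exists>i\<in>I. \<exists>is\<in>tensor_idx (m - 1) n. set is \<subseteq> {..<n} - I \<and> 0 < A (i # is)))"

definition S_set :: "nat \<Rightarrow> nat \<Rightarrow> (nat list \<Rightarrow> real) set" where
  "S_set k n = {B. nonneg_tensor k n B \<and> (\<forall>i<n. row_sum k n B i \<noteq> 0)}"

definition ratio :: "nat \<Rightarrow> nat \<Rightarrow> nat \<Rightarrow> (nat list \<Rightarrow> real) \<Rightarrow> (nat list \<Rightarrow> real) \<Rightarrow> nat \<Rightarrow> real" where
  "ratio m k n A B i =
     row_sum ((m - 1) * (k - 1) + 1) n (tensor_prod m k n A B) i / (row_sum k n B i) ^ (m - 1)"

end

theory Submission
  imports Defs "HOL-Analysis.Analysis"
begin

text \<open>Since \<open>r\<^sub>i(\<A>\<B>) = (\<A> r(\<B>)\<^sup>m\<^sup>-\<^sup>1)\<^sub>i\<close>, the ratios in the theorem are the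
  Collatz--Wielandt quotients \<open>(\<A>x\<^sup>m\<^sup>-\<^sup>1)\<^sub>i / x\<^sub>i\<^sup>m\<^sup>-\<^sup>1\<close> of the positive vector \<open>x = r(\<B>)\<close>,
  and every positive vector is of this form. So it suffices to find a positive eigenvector
  \<open>u\<close>, with eigenvalue \<open>\<lambda>\<close>: comparing \<open>x\<close> with \<open>u\<close> at an index where \<open>u\<^sub>i / x\<^sub>i\<close> is
  extremal and using homogeneity gives \<open>min \<le> \<lambda> \<le> max\<close>, with equality for \<open>x = u\<close>; the same
  comparison applied to \<open>|x|\<close> for any eigenvector \<open>x\<close> gives \<open>\<rho>(\<A>) = \<lambda>\<close>.

  The eigenvector minimises the maximal quotient over a compact set of normalised positive
  vectors. Weak irreducibility is used twice: it bounds the components of a normalised vector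
  with bounded quotients uniformly from below, so no minimiser escapes to the boundary, and it
  allows every vector that is not an eigenvector to be perturbed into one with a strictly
  smaller maximal quotient.\<close>

lemma finite_tensor_idx [simp]: "finite (tensor_idx p n)"
proof -
  have "tensor_idx p n = {xs. set xs \<subseteq> {..<n} \<and> length xs = p}"
    by (auto simp: tensor_idx_def)
  then show ?thesis
    using finite_lists_length_eq[of "{..<n}" p] by simp
qed

lemma tensor_idx_0 [simp]: "tensor_idx 0 n = {[]}"
  by (auto simp: tensor_idx_def)

lemma nth_tensor_idx: "is \<in> tensor_idx p n \<Longrightarrow> j < p \<Longrightarrow> is ! j < n"
  by (auto simp: tensor_idx_def dest!: nth_mem)

lemma Cons_in_tensor_idx: "i < n \<Longrightarrow> is \<in> tensor_idx p n \<Longrightarrow> i # is \<in> tensor_idx (Suc p) n"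
  by (auto simp: tensor_idx_def)

lemma tensor_idx_add:
  "tensor_idx (q + p) n = (\<lambda>(a, b). a @ b) ` (tensor_idx q n \<times> tensor_idx p n)"
proof (intro equalityI subsetI)
  fix xs assume "xs \<in> tensor_idx (q + p) n"
  then have "(take q xs, drop q xs) \<in> tensor_idx q n \<times> tensor_idx p n"
    by (auto simp: tensor_idx_def dest: in_set_takeD in_set_dropD)
  then show "xs \<in> (\<lambda>(a, b). a @ b) ` (tensor_idx q n \<times> tensor_idx p n)"
    by (metis (no_types, lifting) append_take_drop_id case_prod_conv image_eqI)
qed (auto simp: tensor_idx_def)

lemma inj_on_append_tensor_idx: "inj_on (\<lambda>(a, b). a @ b) (tensor_idx q n \<times> tensor_idx p n)"
  by (auto simp: inj_on_def tensor_idx_def)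

lemma block_in_tensor_idx:
  assumes "\<alpha> \<in> tensor_idx (p * q) n" "j < p"
  shows "take q (drop (j * q) \<alpha>) \<in> tensor_idx q n"
proof -
  have "j * q + q \<le> p * q"
    using mult_le_mono1[of "Suc j" p q] assms(2) by simp
  then show ?thesis
    using assms(1) by (auto simp: tensor_idx_def dest: in_set_takeD in_set_dropD)
qed

lemma sum_prod_blocks_tensor_idx:
  "(\<Sum>xs\<in>tensor_idx (p * q) n. \<Prod>j<p. f j (take q (drop (j * q) xs)))
     = (\<Prod>j<p. \<Sum>\<alpha>\<in>tensor_idx q n. (f j \<alpha> :: real))"
proof (induction p arbitrary: f)
  case 0
  then show ?case by simp
next
  case (Suc p)
  have "(\<Sum>xs\<in>tensor_idx (Suc p * q) n. \<Prod>j<Suc p. f j (take q (drop (j * q) xs)))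
      = (\<Sum>(a, b)\<in>tensor_idx q n \<times> tensor_idx (p * q) n.
            \<Prod>j<Suc p. f j (take q (drop (j * q) (a @ b))))"
    unfolding mult_Suc tensor_idx_add
    by (subst sum.reindex[OF inj_on_append_tensor_idx]) (simp add: case_prod_unfold comp_def)
  also have "\<dots> = (\<Sum>(a, b)\<in>tensor_idx q n \<times> tensor_idx (p * q) n.
            f 0 a * (\<Prod>j<p. f (Suc j) (take q (drop (j * q) b))))"
    unfolding prod.lessThan_Suc_shift by (intro sum.cong refl) (auto simp: tensor_idx_def)
  also have "\<dots> = (\<Sum>a\<in>tensor_idx q n. f 0 a) *
      (\<Sum>b\<in>tensor_idx (p * q) n. \<Prod>j<p. f (Suc j) (take q (drop (j * q) b)))"
    by (simp add: sum_product sum.cartesian_product)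
  also have "\<dots> = (\<Prod>j<Suc p. \<Sum>\<alpha>\<in>tensor_idx q n. f j \<alpha>)"
    unfolding prod.lessThan_Suc_shift using Suc.IH[of "\<lambda>j. f (Suc j)"] by simp
  finally show ?case .
qed

lemma nonneg_tensor_Cons:
  "nonneg_tensor m n A \<Longrightarrow> 1 \<le> m \<Longrightarrow> i < n \<Longrightarrow> js \<in> tensor_idx (m - 1) n \<Longrightarrow> 0 \<le> A (i # js)"
  using Cons_in_tensor_idx[of i n js "m - 1"] by (auto simp: nonneg_tensor_def)

lemma row_sum_nonneg: "0 \<le> row_sum k n B i"
  unfolding row_sum_def by (intro sum_nonneg) auto

lemma row_sum_nonneg_tensor:
  assumes "1 \<le> k" "nonneg_tensor k n B" "i < n"
  shows "row_sum k n B i = (\<Sum>\<beta>\<in>tensor_idx (k - 1) n. B (i # \<beta>))"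
  unfolding row_sum_def using nonneg_tensor_Cons[OF assms(2,1,3)] by (intro sum.cong) auto

definition tensor_apply :: "nat \<Rightarrow> nat \<Rightarrow> (nat list \<Rightarrow> real) \<Rightarrow> (nat \<Rightarrow> real) \<Rightarrow> nat \<Rightarrow> real" where
  "tensor_apply m n A x i = (\<Sum>is\<in>tensor_idx (m - 1) n. A (i # is) * (\<Prod>j<m - 1. x (is ! j)))"

lemma row_sum_tensor_prod:
  assumes "1 \<le> m" "1 \<le> k" "nonneg_tensor m n A" "nonneg_tensor k n B" "i < n"
  shows "row_sum ((m - 1) * (k - 1) + 1) n (tensor_prod m k n A B) i
           = tensor_apply m n A (row_sum k n B) i"
proof -
  let ?block = "\<lambda>\<alpha> j. take (k - 1) (drop (j * (k - 1)) \<alpha>)"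
  let ?T = "\<lambda>\<alpha> js. A (i # js) * (\<Prod>j<m - 1. B (js ! j # ?block \<alpha> j))"
  have T_nonneg: "0 \<le> ?T \<alpha> js"
    if "\<alpha> \<in> tensor_idx ((m - 1) * (k - 1)) n" "js \<in> tensor_idx (m - 1) n" for \<alpha> js
    using that assms nonneg_tensor_Cons[of k n B] nonneg_tensor_Cons[of m n A]
    by (intro mult_nonneg_nonneg prod_nonneg) (auto intro: nth_tensor_idx block_in_tensor_idx)
  have "row_sum ((m - 1) * (k - 1) + 1) n (tensor_prod m k n A B) i
      = (\<Sum>\<alpha>\<in>tensor_idx ((m - 1) * (k - 1)) n. \<Sum>js\<in>tensor_idx (m - 1) n. ?T \<alpha> js)"
    unfolding row_sum_def
  proof (rule sum.cong)
    fix \<alpha> assume "\<alpha> \<in> tensor_idx ((m - 1) * (k - 1)) n"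
    then show "\<bar>tensor_prod m k n A B (i # \<alpha>)\<bar> = (\<Sum>js\<in>tensor_idx (m - 1) n. ?T \<alpha> js)"
      unfolding tensor_prod_def using T_nonneg by (simp add: sum_nonneg)
  qed simp
  also have "\<dots> = (\<Sum>js\<in>tensor_idx (m - 1) n.
                   A (i # js) * (\<Sum>\<alpha>\<in>tensor_idx ((m - 1) * (k - 1)) n. \<Prod>j<m - 1. B (js ! j # ?block \<alpha> j)))"
    by (subst sum.swap) (simp add: sum_distrib_left)
  also have "\<dots> = (\<Sum>js\<in>tensor_idx (m - 1) n.
                   A (i # js) * (\<Prod>j<m - 1. \<Sum>\<beta>\<in>tensor_idx (k - 1) n. B (js ! j # \<beta>)))"
    by (intro sum.cong refl arg_cong2[where f = "(*)"] sum_prod_blocks_tensor_idx)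
  also have "\<dots> = tensor_apply m n A (row_sum k n B) i"
    unfolding tensor_apply_def
    by (intro sum.cong prod.cong arg_cong2[where f = "(*)"] refl)
      (simp add: row_sum_nonneg_tensor[OF assms(2,4)] nth_tensor_idx)
  finally show ?thesis .
qed

lemma tensor_apply_cong:
  "(\<And>l. l < n \<Longrightarrow> x l = y l) \<Longrightarrow> tensor_apply m n A x i = tensor_apply m n A y i"
  unfolding tensor_apply_def by (intro sum.cong prod.cong arg_cong2[where f = "(*)"] refl) (auto simp: nth_tensor_idx)

lemma tensor_apply_scale: "tensor_apply m n A (\<lambda>l. c * x l) i = c ^ (m - 1) * tensor_apply m n A x i"
  unfolding tensor_apply_def by (simp add: prod.distrib sum_distrib_left mult.left_commute)

lemma tensor_apply_nonneg:
  assumes "nonneg_tensor m n A" "1 \<le> m" "i < n" "\<And>l. l < n \<Longrightarrow> 0 \<le> x l"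
  shows "0 \<le> tensor_apply m n A x i"
  unfolding tensor_apply_def using assms nonneg_tensor_Cons[OF assms(1,2,3)]
  by (intro sum_nonneg mult_nonneg_nonneg prod_nonneg) (auto simp: nth_tensor_idx)

lemma term_le_tensor_apply:
  assumes "nonneg_tensor m n A" "1 \<le> m" "i < n" "js \<in> tensor_idx (m - 1) n" "\<And>l. l < n \<Longrightarrow> 0 \<le> x l"
  shows "A (i # js) * (\<Prod>j<m - 1. x (js ! j)) \<le> tensor_apply m n A x i"
  unfolding tensor_apply_def
proof (rule member_le_sum[OF assms(4)])
  show "0 \<le> A (i # js') * (\<Prod>j<m - 1. x (js' ! j))" if "js' \<in> tensor_idx (m - 1) n - {js}" for js'
    using that nonneg_tensor_Cons[OF assms(1-3), of js'] assms(5)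
    by (intro mult_nonneg_nonneg prod_nonneg) (auto simp: nth_tensor_idx)
qed simp

lemma tensor_apply_term_mono:
  assumes "nonneg_tensor m n A" "1 \<le> m" "i < n" "js \<in> tensor_idx (m - 1) n"
    "\<And>l. l < n \<Longrightarrow> 0 \<le> x l" "\<And>l. l < n \<Longrightarrow> x l \<le> y l"
  shows "A (i # js) * (\<Prod>j<m - 1. x (js ! j)) \<le> A (i # js) * (\<Prod>j<m - 1. y (js ! j))"
  using assms nonneg_tensor_Cons[OF assms(1-4)]
  by (intro mult_left_mono prod_mono) (auto simp: nth_tensor_idx)

lemma tensor_apply_mono:
  assumes "nonneg_tensor m n A" "1 \<le> m" "i < n"
    "\<And>l. l < n \<Longrightarrow> 0 \<le> x l" "\<And>l. l < n \<Longrightarrow> x l \<le> y l"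
  shows "tensor_apply m n A x i \<le> tensor_apply m n A y i"
  unfolding tensor_apply_def using tensor_apply_term_mono[of m n A i _ x y] assms
  by (intro sum_mono) blast

lemma tensor_apply_strict_mono:
  assumes "nonneg_tensor m n A" "1 \<le> m" "i < n"
    "\<And>l. l < n \<Longrightarrow> 0 \<le> x l" "\<And>l. l < n \<Longrightarrow> x l \<le> y l"
    "js \<in> tensor_idx (m - 1) n" "0 < A (i # js)" "(\<Prod>j<m - 1. x (js ! j)) < (\<Prod>j<m - 1. y (js ! j))"
  shows "tensor_apply m n A x i < tensor_apply m n A y i"
proof -
  have "A (i # js) * (\<Prod>j<m - 1. x (js ! j)) < A (i # js) * (\<Prod>j<m - 1. y (js ! j))"
    using assms(7,8) by simp
  then show ?thesis
    unfolding tensor_apply_def using tensor_apply_term_mono[of m n A i _ x y] assms(1-6)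
    by (intro sum_strict_mono_ex1) auto
qed

lemma ex_max_ratio:
  fixes a y :: "nat \<Rightarrow> real"
  assumes "1 \<le> n" "\<And>l. l < n \<Longrightarrow> 0 < y l"
  obtains i where "i < n" "\<And>l. l < n \<Longrightarrow> a l * y i \<le> a i * y l"
proof -
  let ?f = "\<lambda>l. a l / y l"
  have "Max (?f ` {..<n}) \<in> ?f ` {..<n}"
    using assms(1) by (intro Max_in) (auto simp: lessThan_empty_iff)
  then obtain i where i: "i < n" "?f i = Max (?f ` {..<n})"
    by auto
  have "a l * y i \<le> a i * y l" if "l < n" for l
  proof -
    have "?f l \<le> ?f i" using i that by simp
    then show ?thesis using assms(2)[OF that] assms(2)[OF i(1)] by (simp add: field_simps)
  qed
  then show thesis using that i(1) by blast
qed

lemma ex_min_ratio: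
  fixes a y :: "nat \<Rightarrow> real"
  assumes "1 \<le> n" "\<And>l. l < n \<Longrightarrow> 0 < y l"
  obtains i where "i < n" "\<And>l. l < n \<Longrightarrow> a i * y l \<le> a l * y i"
proof -
  obtain i where "i < n" "\<And>l. l < n \<Longrightarrow> - a l * y i \<le> - a i * y l"
    using ex_max_ratio[of n y "\<lambda>l. - a l"] assms by blast
  then show thesis using that by simp
qed

text \<open>The comparison principle behind all eigenvalue bounds: at an index maximising \<open>a / y\<close>
  we have \<open>a \<le> t y\<close> with equality, and homogeneity transfers the bound on \<open>y\<close> to \<open>a\<close>.\<close>
lemma tensor_apply_le_at_max_ratio:
  assumes "nonneg_tensor m n A" "1 \<le> m" "i < n"
    and y: "\<And>l. l < n \<Longrightarrow> 0 < y l" and super: "tensor_apply m n A y i \<le> s * y i ^ (m - 1)"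
    and a: "\<And>l. l < n \<Longrightarrow> 0 \<le> a l" and max: "\<And>l. l < n \<Longrightarrow> a l * y i \<le> a i * y l"
  shows "tensor_apply m n A a i \<le> s * a i ^ (m - 1)"
proof -
  define t where "t = a i / y i"
  have t: "0 \<le> t" "a i = t * y i"
    using a[OF \<open>i < n\<close>] y[OF \<open>i < n\<close>] by (auto simp: t_def)
  have "a l \<le> t * y l" if "l < n" for l
    using max[OF that] y[OF \<open>i < n\<close>] by (simp add: t_def field_simps)
  then have "tensor_apply m n A a i \<le> tensor_apply m n A (\<lambda>l. t * y l) i"
    by (intro tensor_apply_mono[OF assms(1-3)]) (use a in auto)
  also have "\<dots> = t ^ (m - 1) * tensor_apply m n A y i"
    by (rule tensor_apply_scale)
  also have "\<dots> \<le> t ^ (m - 1) * (s * y i ^ (m - 1))"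
    using super t(1) by (intro mult_left_mono) auto
  also have "\<dots> = s * a i ^ (m - 1)"
    by (simp add: t(2) power_mult_distrib)
  finally show ?thesis .
qed

lemma tensor_apply_ge_at_min_ratio:
  assumes "nonneg_tensor m n A" "1 \<le> m" "i < n"
    and y: "\<And>l. l < n \<Longrightarrow> 0 < y l" and sub: "s * y i ^ (m - 1) \<le> tensor_apply m n A y i"
    and a: "0 \<le> a i" and min: "\<And>l. l < n \<Longrightarrow> a i * y l \<le> a l * y i"
  shows "s * a i ^ (m - 1) \<le> tensor_apply m n A a i"
proof -
  define t where "t = a i / y i"
  have t: "0 \<le> t" "a i = t * y i"
    using a y[OF \<open>i < n\<close>] by (auto simp: t_def)
  have "s * a i ^ (m - 1) = t ^ (m - 1) * (s * y i ^ (m - 1))"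
    by (simp add: t(2) power_mult_distrib)
  also have "\<dots> \<le> t ^ (m - 1) * tensor_apply m n A y i"
    using sub t(1) by (intro mult_left_mono) auto
  also have "\<dots> = tensor_apply m n A (\<lambda>l. t * y l) i"
    by (rule tensor_apply_scale[symmetric])
  also have "\<dots> \<le> tensor_apply m n A a i"
  proof (rule tensor_apply_mono[OF assms(1-3)])
    show "0 \<le> t * y l" "t * y l \<le> a l" if "l < n" for l
      using min[OF that] y[OF that] y[OF \<open>i < n\<close>] t(1) by (simp_all add: t_def field_simps)
  qed
  finally show ?thesis .
qed

definition collatz_quotient :: "nat \<Rightarrow> nat \<Rightarrow> (nat list \<Rightarrow> real) \<Rightarrow> (nat \<Rightarrow> real) \<Rightarrow> nat \<Rightarrow> real" where
  "collatz_quotient m n A x i = tensor_apply m n A x i / x i ^ (m - 1)"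

definition max_quotient :: "nat \<Rightarrow> nat \<Rightarrow> (nat list \<Rightarrow> real) \<Rightarrow> (nat \<Rightarrow> real) \<Rightarrow> real" where
  "max_quotient m n A x = Max (collatz_quotient m n A x ` {..<n})"

definition min_quotient :: "nat \<Rightarrow> nat \<Rightarrow> (nat list \<Rightarrow> real) \<Rightarrow> (nat \<Rightarrow> real) \<Rightarrow> real" where
  "min_quotient m n A x = Min (collatz_quotient m n A x ` {..<n})"

lemma tensor_apply_le_max_quotient:
  assumes "i < n" "0 < x i"
  shows "tensor_apply m n A x i \<le> max_quotient m n A x * x i ^ (m - 1)"
proof -
  have "collatz_quotient m n A x i \<le> max_quotient m n A x"
    unfolding max_quotient_def using assms(1) by (intro Max_ge) auto
  then show ?thesis using assms(2) by (simp add: collatz_quotient_def divide_le_eq)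
qed

lemma min_quotient_le_tensor_apply:
  assumes "i < n" "0 < x i"
  shows "min_quotient m n A x * x i ^ (m - 1) \<le> tensor_apply m n A x i"
proof -
  have "min_quotient m n A x \<le> collatz_quotient m n A x i"
    unfolding min_quotient_def using assms(1) by (intro Min_le) auto
  then show ?thesis using assms(2) by (simp add: collatz_quotient_def le_divide_eq)
qed

lemma eigenvalue_le_max_quotient:
  assumes "nonneg_tensor m n A" "1 \<le> m" "1 \<le> n"
    and u: "\<And>i. i < n \<Longrightarrow> 0 < u i" "\<And>i. i < n \<Longrightarrow> tensor_apply m n A u i = lam * u i ^ (m - 1)"
    and y: "\<And>i. i < n \<Longrightarrow> 0 < y i"
  shows "lam \<le> max_quotient m n A y"
proof -
  obtain i where i: "i < n" "\<And>l. l < n \<Longrightarrow> u l * y i \<le> u i * y l"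
    using ex_max_ratio[of n y u] assms(3) y by blast
  have "lam * u i ^ (m - 1) = tensor_apply m n A u i"
    using u(2) i(1) by simp
  also have "\<dots> \<le> max_quotient m n A y * u i ^ (m - 1)"
  proof (rule tensor_apply_le_at_max_ratio[OF assms(1,2) i(1)])
    show "tensor_apply m n A y i \<le> max_quotient m n A y * y i ^ (m - 1)"
      using i(1) y[OF i(1)] by (rule tensor_apply_le_max_quotient)
  qed (use y u(1) i(2) in \<open>auto simp: less_imp_le\<close>)
  finally show ?thesis using u(1)[OF i(1)] by simp
qed

lemma min_quotient_le_eigenvalue:
  assumes "nonneg_tensor m n A" "1 \<le> m" "1 \<le> n"
    and u: "\<And>i. i < n \<Longrightarrow> 0 < u i" "\<And>i. i < n \<Longrightarrow> tensor_apply m n A u i = lam * u i ^ (m - 1)"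
    and y: "\<And>i. i < n \<Longrightarrow> 0 < y i"
  shows "min_quotient m n A y \<le> lam"
proof -
  obtain i where i: "i < n" "\<And>l. l < n \<Longrightarrow> u i * y l \<le> u l * y i"
    using ex_min_ratio[of n y u] assms(3) y by blast
  have "min_quotient m n A y * u i ^ (m - 1) \<le> tensor_apply m n A u i"
  proof (rule tensor_apply_ge_at_min_ratio[OF assms(1,2) i(1)])
    show "min_quotient m n A y * y i ^ (m - 1) \<le> tensor_apply m n A y i"
      using i(1) y[OF i(1)] by (rule min_quotient_le_tensor_apply)
  qed (use y u(1) i in \<open>auto simp: less_imp_le\<close>)
  also have "\<dots> = lam * u i ^ (m - 1)"
    using u(2) i(1) by simp
  finally show ?thesis using u(1)[OF i(1)] by simp
qed

lemma norm_eigenvalue_le: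
  assumes "nonneg_tensor m n A" "1 \<le> m" "1 \<le> n"
    and u: "\<And>i. i < n \<Longrightarrow> 0 < u i" "\<And>i. i < n \<Longrightarrow> tensor_apply m n A u i = lam * u i ^ (m - 1)"
    and "tensor_eigenvalue m n A l"
  shows "cmod l \<le> lam"
proof -
  obtain x where x: "\<exists>i<n. x i \<noteq> 0" and eig: "\<And>i. i < n \<Longrightarrow>
      (\<Sum>is\<in>tensor_idx (m - 1) n. complex_of_real (A (i # is)) * (\<Prod>j<m - 1. x (is ! j))) = l * x i ^ (m - 1)"
    using assms(6) unfolding tensor_eigenvalue_def by blast
  define a where "a = (\<lambda>i. cmod (x i))"
  obtain i where i: "i < n" "\<And>l. l < n \<Longrightarrow> a l * u i \<le> a i * u l"
    using ex_max_ratio[of n u a] assms(3) u(1) by blast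
  have "0 < a i"
  proof -
    obtain l where l: "l < n" "x l \<noteq> 0" using x by blast
    then have "0 < a l * u i" using u(1) i(1) by (simp add: a_def)
    also have "\<dots> \<le> a i * u l" using i(2) l(1) .
    finally show ?thesis using u(1)[OF l(1)] by (simp add: zero_less_mult_iff a_def)
  qed
  have "cmod l * a i ^ (m - 1) = cmod (\<Sum>is\<in>tensor_idx (m - 1) n.
      complex_of_real (A (i # is)) * (\<Prod>j<m - 1. x (is ! j)))"
    using eig[OF i(1)] by (simp add: a_def norm_mult norm_power)
  also have "\<dots> \<le> tensor_apply m n A a i"
    unfolding tensor_apply_def using nonneg_tensor_Cons[OF assms(1,2) i(1)]
    by (auto intro!: order.trans[OF norm_sum] sum_mono simp: norm_mult prod_norm a_def)
  also have "\<dots> \<le> lam * a i ^ (m - 1)"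
    by (rule tensor_apply_le_at_max_ratio[where y = u, OF assms(1,2) i(1)]) (use u u(2)[OF i(1)] i(2) in \<open>auto simp: a_def\<close>)
  finally show ?thesis using \<open>0 < a i\<close> by simp
qed

lemma eigenvalue_nonneg:
  assumes "nonneg_tensor m n A" "1 \<le> m" "1 \<le> n"
    and u: "\<And>i. i < n \<Longrightarrow> 0 < u i" "\<And>i. i < n \<Longrightarrow> tensor_apply m n A u i = lam * u i ^ (m - 1)"
  shows "0 \<le> lam"
proof -
  have "0 \<le> lam * u 0 ^ (m - 1)"
    using tensor_apply_nonneg[OF assms(1,2), of 0 u] u assms(3) by (simp add: less_imp_le)
  moreover have "0 < u 0 ^ (m - 1)"
    using u(1)[of 0] assms(3) by simp
  ultimately show ?thesis
    by (simp add: zero_le_mult_iff)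
qed

lemma spectral_radius_eq_eigenvalue:
  assumes "nonneg_tensor m n A" "1 \<le> m" "1 \<le> n" "0 \<le> lam"
    and u: "\<And>i. i < n \<Longrightarrow> 0 < u i" "\<And>i. i < n \<Longrightarrow> tensor_apply m n A u i = lam * u i ^ (m - 1)"
  shows "spectral_radius m n A = lam"
  unfolding spectral_radius_def
proof (rule cSup_eq_maximum)
  have "tensor_eigenvalue m n A (complex_of_real lam)"
    unfolding tensor_eigenvalue_def
  proof (intro exI[of _ "\<lambda>i. complex_of_real (u i)"] conjI allI impI)
    show "\<exists>i<n. complex_of_real (u i) \<noteq> 0"
      using u(1)[of 0] assms(3) by (intro exI[of _ 0]) auto
    show "(\<Sum>is\<in>tensor_idx (m - 1) n. complex_of_real (A (i # is)) * (\<Prod>j<m - 1. complex_of_real (u (is ! j))))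
        = complex_of_real lam * complex_of_real (u i) ^ (m - 1)" if "i < n" for i
      using arg_cong[OF u(2)[OF that], of complex_of_real] by (simp add: tensor_apply_def)
  qed
  then show "lam \<in> {cmod l |l. tensor_eigenvalue m n A l}"
    using assms(4) by force
qed (use norm_eigenvalue_le[OF assms(1-3) u] in auto)

lemma positive_entries_bounded_below:
  fixes A :: "nat list \<Rightarrow> real"
  obtains c where "0 < c"
    "\<And>i js. i < n \<Longrightarrow> js \<in> tensor_idx p n \<Longrightarrow> 0 < A (i # js) \<Longrightarrow> c \<le> A (i # js)"
proof -
  define P where "P = (\<lambda>(i, js). A (i # js)) ` ({..<n} \<times> tensor_idx p n) \<inter> {0<..}"
  have "finite P"
    unfolding P_def by simp
  show thesis
  proof (rule that)
    show "0 < Min (insert 1 P)"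
      using \<open>finite P\<close> by (auto simp: P_def)
    fix i js assume "i < n" "js \<in> tensor_idx p n" "0 < A (i # js)"
    then have "A (i # js) \<in> P"
      unfolding P_def by force
    then show "Min (insert 1 P) \<le> A (i # js)"
      using \<open>finite P\<close> by simp
  qed
qed

text \<open>Weak irreducibility lets a lower bound on the components of a subsolution spread from
  a set \<open>S\<close> of indices to one more index, losing a factor \<open>\<theta>\<close>.\<close>
lemma weakly_irreducible_lower_bound_step:
  assumes "2 \<le> m" "nonneg_tensor m n A" "weakly_irreducible m n A"
    and c: "\<And>i js. i < n \<Longrightarrow> js \<in> tensor_idx (m - 1) n \<Longrightarrow> 0 < A (i # js) \<Longrightarrow> c \<le> A (i # js)"
    and \<theta>: "0 < C" "0 < \<theta>" "C * \<theta> ^ (m - 1) \<le> c"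
    and x: "\<And>i. i < n \<Longrightarrow> 0 \<le> x i" "\<And>i. i < n \<Longrightarrow> tensor_apply m n A x i \<le> C * x i ^ (m - 1)"
    and S: "S \<noteq> {}" "S \<subset> {..<n}" "\<And>j. j \<in> S \<Longrightarrow> \<theta> ^ t \<le> x j"
  obtains i where "i < n" "i \<notin> S" "\<theta> ^ Suc t \<le> x i"
proof -
  have "{..<n} - S \<noteq> {}" "{..<n} - S \<subset> {..<n}"
    using S(1,2) by auto
  then obtain i js where i: "i \<in> {..<n} - S"
    and js: "js \<in> tensor_idx (m - 1) n" "set js \<subseteq> {..<n} - ({..<n} - S)" "0 < A (i # js)"
    using assms(3)[unfolded weakly_irreducible_def, rule_format, of "{..<n} - S"] by blast
  from i have i: "i < n" "i \<notin> S"
    by auto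
  from js(2) S(2) have "set js \<subseteq> S"
    by auto
  have "js ! j \<in> S" if "j < m - 1" for j
    using nth_mem[of j js] js(1) \<open>set js \<subseteq> S\<close> that by (auto simp: tensor_idx_def)
  then have "(\<Prod>j<m - 1. \<theta> ^ t) \<le> (\<Prod>j<m - 1. x (js ! j))"
    using S(3) \<theta>(2) by (intro prod_mono) auto
  then have "(\<theta> ^ t) ^ (m - 1) \<le> (\<Prod>j<m - 1. x (js ! j))"
    by simp
  moreover have "0 \<le> c"
    using \<theta> by (smt (verit) mult_pos_pos zero_less_power)
  ultimately have "C * (\<theta> ^ Suc t) ^ (m - 1) \<le> c * (\<Prod>j<m - 1. x (js ! j))"
    using \<theta> mult_mono[OF \<theta>(3) \<open>(\<theta> ^ t) ^ (m - 1) \<le> _\<close>] by (simp add: power_mult_distrib mult.assoc)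
  also have "\<dots> \<le> A (i # js) * (\<Prod>j<m - 1. x (js ! j))"
    using c[OF i(1) js(1,3)] x(1) js(1) by (intro mult_right_mono prod_nonneg) (auto simp: nth_tensor_idx)
  also have "\<dots> \<le> tensor_apply m n A x i"
    using assms(1,2) by (intro term_le_tensor_apply[OF assms(2) _ i(1) js(1) x(1)]) auto
  also have "\<dots> \<le> C * x i ^ (m - 1)"
    using x(2) i(1) .
  finally have "(\<theta> ^ Suc t) ^ (m - 1) \<le> x i ^ (m - 1)"
    using \<theta>(1) by simp
  then have "\<theta> ^ Suc t \<le> x i"
    using assms(1) x(1)[OF i(1)] \<theta>(2) by simp
  then show thesis
    using that i by blast
qed

lemma weakly_irreducible_lower_bound:
  assumes "2 \<le> m" "nonneg_tensor m n A" "weakly_irreducible m n A"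
    and c: "\<And>i js. i < n \<Longrightarrow> js \<in> tensor_idx (m - 1) n \<Longrightarrow> 0 < A (i # js) \<Longrightarrow> c \<le> A (i # js)"
    and \<theta>: "0 < C" "0 < \<theta>" "\<theta> \<le> 1" "C * \<theta> ^ (m - 1) \<le> c"
    and x: "\<And>i. i < n \<Longrightarrow> 0 \<le> x i" "\<And>i. i < n \<Longrightarrow> tensor_apply m n A x i \<le> C * x i ^ (m - 1)"
    and "i1 < n" "x i1 = 1" "i < n"
  shows "\<theta> ^ (n - 1) \<le> x i"
proof -
  have "\<exists>S\<subseteq>{..<n}. card S = Suc t \<and> (\<forall>j\<in>S. \<theta> ^ t \<le> x j)" if "t < n" for t
    using that
  proof (induction t)
    case 0
    then show ?case
      using \<open>i1 < n\<close> \<open>x i1 = 1\<close> by (intro exI[of _ "{i1}"]) auto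
  next
    case (Suc t)
    then obtain S where S: "S \<subseteq> {..<n}" "card S = Suc t" "\<forall>j\<in>S. \<theta> ^ t \<le> x j"
      by auto
    have "S \<noteq> {}" "S \<subset> {..<n}"
      using S(1,2) Suc.prems by auto
    then obtain i where i: "i < n" "i \<notin> S" "\<theta> ^ Suc t \<le> x i"
      using weakly_irreducible_lower_bound_step[of m n A c C \<theta> x S t, OF assms(1-3) c \<theta>(1,2,4) x] S(3)
      by blast
    have "\<theta> ^ Suc t \<le> \<theta> ^ t"
      using \<theta>(2,3) by (simp add: mult_left_le_one_le)
    then show ?case
      using S i finite_subset[OF S(1)] by (intro exI[of _ "insert i S"]) force
  qed
  then obtain S where "S \<subseteq> {..<n}" "card S = n" "\<forall>j\<in>S. \<theta> ^ (n - 1) \<le> x j"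
    using \<open>i < n\<close> by (metis Suc_diff_1 diff_less gr_implies_not0 not_gr_zero zero_less_one)
  moreover from this have "S = {..<n}"
    by (intro card_subset_eq) auto
  ultimately show ?thesis
    using \<open>i < n\<close> by auto
qed

lemma ex_gt_1_power_mult_less:
  fixes a b :: "'a \<Rightarrow> real"
  assumes "finite I" "\<And>i. i \<in> I \<Longrightarrow> a i < b i"
  shows "\<exists>\<mu>>1. \<forall>i\<in>I. \<mu> ^ p * a i < b i"
proof -
  have "\<forall>\<^sub>F \<mu> in at_right 1. \<forall>i\<in>I. \<mu> ^ p * a i < b i"
  proof (rule eventually_ball_finite[OF assms(1)], intro ballI)
    fix i assume "i \<in> I"
    have "((\<lambda>\<mu>::real. \<mu> ^ p * a i) \<longlongrightarrow> 1 ^ p * a i) (at_right 1)"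
      by (intro tendsto_intros)
    then show "\<forall>\<^sub>F \<mu> in at_right 1. \<mu> ^ p * a i < b i"
      using assms(2)[OF \<open>i \<in> I\<close>] by (auto dest: order_tendstoD)
  qed
  moreover have "\<forall>\<^sub>F \<mu> in at_right (1::real). 1 < \<mu>"
    by (simp add: eventually_at_right_less)
  ultimately have "\<forall>\<^sub>F \<mu> in at_right (1::real). 1 < \<mu> \<and> (\<forall>i\<in>I. \<mu> ^ p * a i < b i)"
    by eventually_elim auto
  then show ?thesis
    using eventually_happens[of _ "at_right (1::real)"] by auto
qed

lemma tensor_apply_less_scaled:
  assumes "nonneg_tensor m n A" "2 \<le> m" "i < n" "js \<in> tensor_idx (m - 1) n" "0 < A (i # js)"
    and "1 < \<mu>" "\<And>l. l < n \<Longrightarrow> 0 < x l" "\<And>l. l < n \<Longrightarrow> 0 \<le> y l" "\<And>l. l < n \<Longrightarrow> y l \<le> \<mu> * x l"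
    and "\<And>l. l \<in> set js \<Longrightarrow> y l = x l"
  shows "tensor_apply m n A y i < \<mu> ^ (m - 1) * tensor_apply m n A x i"
proof -
  have js: "js ! j \<in> set js" "js ! j < n" if "j < m - 1" for j
    using assms(4) that by (auto simp: tensor_idx_def nth_tensor_idx)
  have "(\<Prod>j<m - 1. y (js ! j)) = (\<Prod>j<m - 1. x (js ! j))"
    using js(1) assms(10) by simp
  also have "\<dots> < \<mu> ^ (m - 1) * (\<Prod>j<m - 1. x (js ! j))"
  proof -
    have "0 < (\<Prod>j<m - 1. x (js ! j))"
      using js(2) assms(7) by (intro prod_pos) auto
    moreover have "1 < \<mu> ^ (m - 1)"
      using assms(2,6) by (intro one_less_power) auto
    ultimately show ?thesis
      by simp
  qed
  also have "\<dots> = (\<Prod>j<m - 1. \<mu> * x (js ! j))"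
    by (simp add: prod.distrib)
  finally have "tensor_apply m n A y i < tensor_apply m n A (\<lambda>l. \<mu> * x l) i"
    using assms(2,8,9) by (intro tensor_apply_strict_mono[OF assms(1) _ assms(3) _ _ assms(4,5)]) auto
  then show ?thesis
    by (simp add: tensor_apply_scale)
qed

definition tight_rows :: "nat \<Rightarrow> nat \<Rightarrow> (nat list \<Rightarrow> real) \<Rightarrow> real \<Rightarrow> (nat \<Rightarrow> real) \<Rightarrow> nat set" where
  "tight_rows m n A s x = {i. i < n \<and> tensor_apply m n A x i = s * x i ^ (m - 1)}"

text \<open>Scaling a supersolution up by \<open>\<mu> > 1\<close> on its tight rows \<open>J\<close> keeps it a supersolution
  (\<open>\<mu>\<close> close to \<open>1\<close>), and weak irreducibility provides a row of \<open>J\<close> depending only on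
  indices outside \<open>J\<close>, which thereby becomes strict.\<close>
lemma shrink_tight_rows:
  assumes "2 \<le> m" "nonneg_tensor m n A" "weakly_irreducible m n A"
    and x: "\<And>i. i < n \<Longrightarrow> 0 < x i" "\<And>i. i < n \<Longrightarrow> tensor_apply m n A x i \<le> s * x i ^ (m - 1)"
    and J: "tight_rows m n A s x \<noteq> {}" "tight_rows m n A s x \<noteq> {..<n}"
  shows "\<exists>y. (\<forall>i<n. 0 < y i) \<and> (\<forall>i<n. tensor_apply m n A y i \<le> s * y i ^ (m - 1))
    \<and> tight_rows m n A s y \<subset> tight_rows m n A s x"
proof -
  define J where "J = tight_rows m n A s x"
  have J_sub: "J \<subset> {..<n}"
    using J(2) by (auto simp: J_def tight_rows_def)
  obtain i0 js where i0: "i0 \<in> J" and js: "js \<in> tensor_idx (m - 1) n" "set js \<subseteq> {..<n} - J"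
    and A_pos: "0 < A (i0 # js)"
    using assms(3)[unfolded weakly_irreducible_def, rule_format, of J] J(1) J_sub by (auto simp: J_def)
  have "tensor_apply m n A x i < s * x i ^ (m - 1)" if "i \<in> {..<n} - J" for i
    using x(2) that by (force simp: J_def tight_rows_def)
  then obtain \<mu> where \<mu>: "1 < \<mu>" "\<And>i. i \<in> {..<n} - J \<Longrightarrow> \<mu> ^ (m - 1) * tensor_apply m n A x i < s * x i ^ (m - 1)"
    using ex_gt_1_power_mult_less[of "{..<n} - J" "\<lambda>i. tensor_apply m n A x i" "\<lambda>i. s * x i ^ (m - 1)" "m - 1"]
    by auto
  define y where "y = (\<lambda>i. if i \<in> J then \<mu> * x i else x i)"
  have y_pos: "0 < y i" and y_le: "y i \<le> \<mu> * x i" if "i < n" for i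
    using x(1)[OF that] \<mu>(1) by (auto simp: y_def)
  have y_tensor: "tensor_apply m n A y i \<le> \<mu> ^ (m - 1) * tensor_apply m n A x i" if "i < n" for i
    using tensor_apply_mono[OF assms(2) _ that, of y "\<lambda>l. \<mu> * x l"] y_pos y_le assms(1)
    by (simp add: tensor_apply_scale less_imp_le)
  have y_J: "s * y i ^ (m - 1) = \<mu> ^ (m - 1) * tensor_apply m n A x i" if "i \<in> J" for i
    using that by (simp add: J_def tight_rows_def y_def power_mult_distrib)
  have y_outside: "tensor_apply m n A y i < s * y i ^ (m - 1)" if "i < n" "i \<notin> J" for i
    using y_tensor[OF that(1)] \<mu>(2)[of i] that by (simp add: y_def)
  have y_super: "tensor_apply m n A y i \<le> s * y i ^ (m - 1)" if "i < n" for i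
    using y_tensor[OF that] y_J y_outside[OF that] by (cases "i \<in> J") (auto simp: less_imp_le)
  have "tensor_apply m n A y i0 < \<mu> ^ (m - 1) * tensor_apply m n A x i0"
    using J_sub i0 js(2) x(1) y_pos y_le \<mu>(1)
    by (intro tensor_apply_less_scaled[OF assms(2,1) _ js(1) A_pos]) (auto simp: y_def less_imp_le)
  then have "i0 \<notin> tight_rows m n A s y"
    using y_J[OF i0] by (simp add: tight_rows_def)
  moreover have "tight_rows m n A s y \<subseteq> J"
    using y_outside by (force simp: tight_rows_def)
  ultimately have "tight_rows m n A s y \<subset> J"
    using i0 by blast
  then show ?thesis
    using y_pos y_super unfolding J_def by blast
qed

lemma ex_strict_supersolution:
  assumes "2 \<le> m" "nonneg_tensor m n A" "weakly_irreducible m n A"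
    and "\<And>i. i < n \<Longrightarrow> 0 < x i" "\<And>i. i < n \<Longrightarrow> tensor_apply m n A x i \<le> s * x i ^ (m - 1)"
    and "tight_rows m n A s x \<noteq> {..<n}"
  shows "\<exists>y. (\<forall>i<n. 0 < y i) \<and> (\<forall>i<n. tensor_apply m n A y i < s * y i ^ (m - 1))"
  using assms(4-6)
proof (induction "card (tight_rows m n A s x)" arbitrary: x rule: less_induct)
  case less
  show ?case
  proof (cases "tight_rows m n A s x = {}")
    case True
    have "tensor_apply m n A x i < s * x i ^ (m - 1)" if "i < n" for i
      using less.prems(2)[OF that] True that by (auto simp: tight_rows_def order_less_le)
    then show ?thesis
      using less.prems(1) by blast
  next
    case False
    obtain y where y: "\<forall>i<n. 0 < y i" "\<forall>i<n. tensor_apply m n A y i \<le> s * y i ^ (m - 1)"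
      "tight_rows m n A s y \<subset> tight_rows m n A s x"
      using shrink_tight_rows[of m n A x s, OF assms(1-3) less.prems(1,2) False less.prems(3)] by blast
    have "finite (tight_rows m n A s x)"
      by (simp add: tight_rows_def)
    then have "card (tight_rows m n A s y) < card (tight_rows m n A s x)"
      using y(3) by (rule psubset_card_mono)
    moreover have "tight_rows m n A s y \<noteq> {..<n}"
      using y(3) by (auto simp: tight_rows_def)
    ultimately show ?thesis
      using y(1,2) by (intro less.hyps[of y]) auto
  qed
qed

lemma compact_PiE_UNIV:
  fixes S :: "'a \<Rightarrow> 'b::topological_space set"
  assumes "\<And>i. compact (S i)"
  shows "compact (PiE UNIV S)"
  using assms compactin_PiE[of "\<lambda>_. euclidean" UNIV S]
  by (simp add: euclidean_product_topology compactin_euclidean_iff)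

lemma continuous_on_Max_finite:
  fixes f :: "'i \<Rightarrow> 'a::topological_space \<Rightarrow> 'b::linorder_topology"
  assumes "finite I" "I \<noteq> {}" "\<And>i. i \<in> I \<Longrightarrow> continuous_on K (f i)"
  shows "continuous_on K (\<lambda>x. Max ((\<lambda>i. f i x) ` I))"
  using assms
proof (induction I rule: finite_ne_induct)
  case (insert i I)
  then show ?case
    by (simp add: Max_insert continuous_on_max)
qed simp

lemma continuous_on_max_quotient:
  assumes "1 \<le> n" "\<And>x i. x \<in> K \<Longrightarrow> i < n \<Longrightarrow> x i \<noteq> 0"
  shows "continuous_on K (max_quotient m n A)"
proof -
  have coord: "continuous_on K (\<lambda>x::nat \<Rightarrow> real. x i)" for i
    by (rule continuous_on_subset[OF continuous_on_product_coordinates]) auto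
  have "continuous_on K (\<lambda>x. collatz_quotient m n A x i)" if "i < n" for i
    unfolding collatz_quotient_def tensor_apply_def using assms(2) that
    by (intro continuous_intros coord) auto
  then show ?thesis
    unfolding max_quotient_def[abs_def] using assms(1)
    by (intro continuous_on_Max_finite) (auto simp: lessThan_empty_iff)
qed

lemma collatz_quotient_scale:
  assumes "0 < t" "\<And>l. l < n \<Longrightarrow> z l = t * y l" "i < n"
  shows "collatz_quotient m n A z i = collatz_quotient m n A y i"
proof -
  have "tensor_apply m n A z i = t ^ (m - 1) * tensor_apply m n A y i"
    using tensor_apply_cong[of n z "\<lambda>l. t * y l"] assms(2) by (simp add: tensor_apply_scale)
  then show ?thesis
    using assms by (simp add: collatz_quotient_def power_mult_distrib)
qed

lemma max_quotient_scale:
  "0 < t \<Longrightarrow> (\<And>l. l < n \<Longrightarrow> z l = t * y l) \<Longrightarrow> max_quotient m n A z = max_quotient m n A y"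
  unfolding max_quotient_def by (metis (no_types, lifting) collatz_quotient_scale image_cong lessThan_iff)

lemma max_quotient_less:
  assumes "1 \<le> n" "\<And>i. i < n \<Longrightarrow> 0 < y i" "\<And>i. i < n \<Longrightarrow> tensor_apply m n A y i < s * y i ^ (m - 1)"
  shows "max_quotient m n A y < s"
  unfolding max_quotient_def using assms
  by (subst Max_less_iff) (auto simp: collatz_quotient_def divide_less_eq lessThan_empty_iff)

lemma ex_normalized_multiple:
  fixes y :: "nat \<Rightarrow> real"
  assumes "1 \<le> n" "\<And>i. i < n \<Longrightarrow> 0 < y i"
  shows "\<exists>t z i1. 0 < t \<and> (\<forall>i<n. z i = t * y i) \<and> (\<forall>i\<ge>n. z i = 0) \<and> (\<forall>i<n. z i \<le> 1)
           \<and> i1 < n \<and> z i1 = 1"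
proof -
  obtain i1 where i1: "i1 < n" "\<And>l. l < n \<Longrightarrow> y l * 1 \<le> y i1 * 1"
    using ex_max_ratio[of n "\<lambda>_. 1" y] assms by auto
  define z where "z = (\<lambda>i. if i < n then y i / y i1 else 0)"
  show ?thesis
    using assms(2)[OF i1(1)] i1 by (intro exI[of _ "1 / y i1"] exI[of _ z] exI[of _ i1]) (auto simp: z_def)
qed

text \<open>The coordinates \<open>\<ge> n\<close> are frozen at \<open>0\<close> so that the set is compact in \<open>nat \<Rightarrow> real\<close>.\<close>
definition normalized_cube :: "nat \<Rightarrow> real \<Rightarrow> (nat \<Rightarrow> real) set" where
  "normalized_cube n \<delta> = PiE UNIV (\<lambda>i. if i < n then {\<delta>..1} else {0})"

lemma mem_normalized_cube: "x \<in> normalized_cube n \<delta> \<longleftrightarrow> (\<forall>i<n. \<delta> \<le> x i \<and> x i \<le> 1) \<and> (\<forall>i\<ge>n. x i = 0)"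
proof -
  have "x \<in> normalized_cube n \<delta> \<longleftrightarrow> (\<forall>i. x i \<in> (if i < n then {\<delta>..1} else {0}))"
    by (simp add: normalized_cube_def PiE_UNIV_domain Pi_iff)
  also have "\<dots> \<longleftrightarrow> (\<forall>i<n. \<delta> \<le> x i \<and> x i \<le> 1) \<and> (\<forall>i\<ge>n. x i = 0)"
    by (metis atLeastAtMost_iff not_le singletonD singletonI)
  finally show ?thesis .
qed

lemma compact_normalized_cube: "compact (normalized_cube n \<delta>)"
  unfolding normalized_cube_def by (intro compact_PiE_UNIV) auto

lemma strict_supersolution_normalized_cube:
  assumes "2 \<le> m" "1 \<le> n" "nonneg_tensor m n A" "weakly_irreducible m n A"
    and c: "\<And>i js. i < n \<Longrightarrow> js \<in> tensor_idx (m - 1) n \<Longrightarrow> 0 < A (i # js) \<Longrightarrow> c \<le> A (i # js)"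
    and \<theta>: "0 < C" "0 < \<theta>" "\<theta> \<le> 1" "C * \<theta> ^ (m - 1) \<le> c"
    and y: "\<And>i. i < n \<Longrightarrow> 0 < y i" "\<And>i. i < n \<Longrightarrow> tensor_apply m n A y i < s * y i ^ (m - 1)"
    and "s \<le> C"
  obtains z where "z \<in> normalized_cube n (\<theta> ^ (n - 1))" "max_quotient m n A z < s"
proof -
  obtain t z i1 where z: "0 < t" "\<forall>i<n. z i = t * y i" "\<forall>i\<ge>n. z i = 0" "\<forall>i<n. z i \<le> 1"
    "i1 < n" "z i1 = 1"
    using ex_normalized_multiple[of n y, OF assms(2) y(1)] by blast
  have z_pos: "0 < z i" if "i < n" for i
    using z(1,2) y(1) that by simp
  have "max_quotient m n A z = max_quotient m n A y"
    using z(1,2) by (intro max_quotient_scale) auto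
  also have "\<dots> < s"
    using assms(2) y by (rule max_quotient_less)
  finally have z_less: "max_quotient m n A z < s" .
  have "tensor_apply m n A z i \<le> C * z i ^ (m - 1)" if "i < n" for i
    using tensor_apply_le_max_quotient[of i n z m A] z_pos[OF that] z_less \<open>s \<le> C\<close> that
    by (smt (verit) mult_right_mono zero_le_power)
  then have "\<theta> ^ (n - 1) \<le> z i" if "i < n" for i
    using weakly_irreducible_lower_bound[of m n A c C \<theta> z i1 i, OF assms(1,3,4) c \<theta>] z_pos z(5,6) that
    by (simp add: less_imp_le)
  then have "z \<in> normalized_cube n (\<theta> ^ (n - 1))"
    using z(3,4) by (auto simp: mem_normalized_cube)
  then show thesis
    using that z_less by blast
qed

lemma mem_normalized_cube_pos: "x \<in> normalized_cube n \<delta> \<Longrightarrow> 0 < \<delta> \<Longrightarrow> i < n \<Longrightarrow> 0 < x i"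
  by (auto simp: mem_normalized_cube intro: less_le_trans)

lemma minimiser_max_quotient_tight:
  assumes "2 \<le> m" "1 \<le> n" "nonneg_tensor m n A" "weakly_irreducible m n A"
    and c: "\<And>i js. i < n \<Longrightarrow> js \<in> tensor_idx (m - 1) n \<Longrightarrow> 0 < A (i # js) \<Longrightarrow> c \<le> A (i # js)"
    and \<theta>: "0 < C" "0 < \<theta>" "\<theta> \<le> 1" "C * \<theta> ^ (m - 1) \<le> c"
    and x: "x \<in> normalized_cube n (\<theta> ^ (n - 1))"
      "\<And>z. z \<in> normalized_cube n (\<theta> ^ (n - 1)) \<Longrightarrow> max_quotient m n A x \<le> max_quotient m n A z"
    and "max_quotient m n A x \<le> C"
  shows "tight_rows m n A (max_quotient m n A x) x = {..<n}"
proof (rule ccontr)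
  define s where "s = max_quotient m n A x"
  assume "tight_rows m n A (max_quotient m n A x) x \<noteq> {..<n}"
  then have not_tight: "tight_rows m n A s x \<noteq> {..<n}"
    by (simp add: s_def)
  have x_pos: "0 < x i" if "i < n" for i
    using mem_normalized_cube_pos[OF x(1) _ that] \<theta>(2) by simp
  have "tensor_apply m n A x i \<le> s * x i ^ (m - 1)" if "i < n" for i
    unfolding s_def using that x_pos[OF that] by (rule tensor_apply_le_max_quotient)
  then obtain y where y: "\<forall>i<n. 0 < y i" "\<forall>i<n. tensor_apply m n A y i < s * y i ^ (m - 1)"
    using ex_strict_supersolution[of m n A x s, OF assms(1,3,4) x_pos _ not_tight] by blast
  obtain z where z: "z \<in> normalized_cube n (\<theta> ^ (n - 1))" "max_quotient m n A z < s"
    using strict_supersolution_normalized_cube[of m n A c C \<theta> y s, OF assms(1-4) c \<theta>] y \<open>_ \<le> C\<close>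
    unfolding s_def by blast
  show False
    using x(2)[OF z(1)] z(2) unfolding s_def by simp
qed

lemma ex_positive_eigenvector:
  assumes "2 \<le> m" "1 \<le> n" "nonneg_tensor m n A" "weakly_irreducible m n A"
  obtains lam u where "0 \<le> lam" "\<And>i. i < n \<Longrightarrow> 0 < u i"
    "\<And>i. i < n \<Longrightarrow> tensor_apply m n A u i = lam * u i ^ (m - 1)"
proof -
  obtain c where c: "0 < c" "\<And>i js. i < n \<Longrightarrow> js \<in> tensor_idx (m - 1) n \<Longrightarrow> 0 < A (i # js) \<Longrightarrow> c \<le> A (i # js)"
    using positive_entries_bounded_below[of n "m - 1" A] by blast
  define one :: "nat \<Rightarrow> real" where "one = (\<lambda>i. if i < n then 1 else 0)"
  define C where "C = max 1 (max_quotient m n A one)"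
  define \<theta> where "\<theta> = min 1 (c / C)"
  have "0 < C" "0 < \<theta>" "\<theta> \<le> 1"
    using c(1) by (auto simp: C_def \<theta>_def)
  moreover have "C * \<theta> ^ (m - 1) \<le> c"
  proof -
    have "\<theta> ^ (m - 1) \<le> \<theta> ^ 1"
      using \<open>0 < \<theta>\<close> \<open>\<theta> \<le> 1\<close> assms(1) by (intro power_decreasing) auto
    also have "\<dots> \<le> c / C"
      by (simp add: \<theta>_def)
    finally show ?thesis
      using \<open>0 < C\<close> by (simp add: field_simps)
  qed
  ultimately have \<theta>: "0 < C" "0 < \<theta>" "\<theta> \<le> 1" "C * \<theta> ^ (m - 1) \<le> c" .
  define K where "K = normalized_cube n (\<theta> ^ (n - 1))"
  have "one \<in> K"
    using \<theta>(2,3) by (simp add: K_def mem_normalized_cube one_def power_le_one)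
  moreover have "continuous_on K (max_quotient m n A)"
    using assms(2) mem_normalized_cube_pos[of _ n "\<theta> ^ (n - 1)"] \<theta>(2)
    by (intro continuous_on_max_quotient) (force simp: K_def)+
  ultimately obtain x where x: "x \<in> K" "\<forall>z\<in>K. max_quotient m n A x \<le> max_quotient m n A z"
    using continuous_attains_inf[of K "max_quotient m n A"] compact_normalized_cube unfolding K_def by blast
  have "max_quotient m n A x \<le> C"
    using x(2) \<open>one \<in> K\<close> unfolding C_def by force
  then have "tight_rows m n A (max_quotient m n A x) x = {..<n}"
    using x by (intro minimiser_max_quotient_tight[OF assms c(2) \<theta>]) (auto simp: K_def)
  then have eig: "tensor_apply m n A x i = max_quotient m n A x * x i ^ (m - 1)" if "i < n" for i
    using that by (auto simp: tight_rows_def)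
  have x_pos: "0 < x i" if "i < n" for i
    using mem_normalized_cube_pos[of x n "\<theta> ^ (n - 1)" i] x(1) \<theta>(2) that by (simp add: K_def)
  have "0 \<le> max_quotient m n A x"
    using assms(1) by (intro eigenvalue_nonneg[OF assms(3) _ assms(2) x_pos eig]) auto
  then show thesis
    using x_pos eig by (rule that)
qed

lemma ratio_eq_collatz_quotient:
  assumes "1 \<le> m" "1 \<le> k" "nonneg_tensor m n A" "nonneg_tensor k n B" "i < n"
  shows "ratio m k n A B i = collatz_quotient m n A (row_sum k n B) i"
  unfolding ratio_def collatz_quotient_def using row_sum_tensor_prod[OF assms] by simp

lemma Min_Max_ratio:
  assumes "1 \<le> m" "1 \<le> k" "nonneg_tensor m n A" "B \<in> S_set k n"
  shows "Min (ratio m k n A B ` {..<n}) = min_quotient m n A (row_sum k n B)"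
    and "Max (ratio m k n A B ` {..<n}) = max_quotient m n A (row_sum k n B)"
proof -
  have "ratio m k n A B ` {..<n} = collatz_quotient m n A (row_sum k n B) ` {..<n}"
    using ratio_eq_collatz_quotient[OF assms(1-3), of B] assms(4)
    by (intro image_cong) (auto simp: S_set_def)
  then show "Min (ratio m k n A B ` {..<n}) = min_quotient m n A (row_sum k n B)"
    and "Max (ratio m k n A B ` {..<n}) = max_quotient m n A (row_sum k n B)"
    by (simp_all add: min_quotient_def max_quotient_def)
qed

lemma row_sum_pos_if_S_set: "B \<in> S_set k n \<Longrightarrow> i < n \<Longrightarrow> 0 < row_sum k n B i"
  using row_sum_nonneg[of k n B i] by (auto simp: S_set_def order_less_le)

lemma min_max_quotient_eigenvector:
  assumes "1 \<le> n" "\<And>i. i < n \<Longrightarrow> 0 < u i"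
    "\<And>i. i < n \<Longrightarrow> tensor_apply m n A u i = lam * u i ^ (m - 1)"
  shows "min_quotient m n A u = lam" "max_quotient m n A u = lam"
proof -
  have "collatz_quotient m n A u i = lam" if "i < n" for i
    using assms(2)[OF that] assms(3)[OF that] by (simp add: collatz_quotient_def)
  then have "collatz_quotient m n A u ` {..<n} = (\<lambda>_. lam) ` {..<n}"
    by (intro image_cong) auto
  also have "\<dots> = {lam}"
    using assms(1) by (auto simp: image_constant_conv lessThan_empty_iff)
  finally have "collatz_quotient m n A u ` {..<n} = {lam}" .
  then show "min_quotient m n A u = lam" "max_quotient m n A u = lam"
    by (simp_all add: min_quotient_def max_quotient_def)
qed

lemma ex_S_set_row_sum:
  assumes "1 \<le> k" "1 \<le> n" "\<And>i. i < n \<Longrightarrow> 0 < u i"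
  shows "\<exists>B\<in>S_set k n. \<forall>i<n. row_sum k n B i = u i"
proof -
  define B where "B = (\<lambda>xs. if tl xs = replicate (k - 1) 0 then u (hd xs) else 0)"
  have "hd xs < n" if "xs \<in> tensor_idx k n" for xs
  proof -
    have "xs \<noteq> []"
      using that assms(1) by (auto simp: tensor_idx_def)
    then show ?thesis
      using that hd_in_set[OF \<open>xs \<noteq> []\<close>] unfolding tensor_idx_def by blast
  qed
  then have "nonneg_tensor k n B"
    unfolding nonneg_tensor_def B_def using assms(3) by (simp add: less_imp_le)
  moreover have row_sum: "row_sum k n B i = u i" if "i < n" for i
  proof -
    have "replicate (k - 1) 0 \<in> tensor_idx (k - 1) n"
      using assms(2) by (auto simp: tensor_idx_def)
    then have "row_sum k n B i = \<bar>u i\<bar>"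
      unfolding row_sum_def B_def by (simp add: if_distrib sum.delta' cong: if_cong)
    then show ?thesis
      using assms(3)[OF that] by simp
  qed
  ultimately have "B \<in> S_set k n"
    using assms(3) by (auto simp: S_set_def less_imp_neq[THEN not_sym])
  then show ?thesis
    using row_sum by blast
qed

theorem theorem3p5:
  fixes m n k :: nat and A :: "nat list \<Rightarrow> real"
  assumes "m \<ge> 2" and "n \<ge> 1" and "k \<ge> 1"
    and "nonneg_tensor m n A" and "weakly_irreducible m n A"
  shows "(\<exists>B\<in>S_set k n. Min (ratio m k n A B ` {..<n}) = spectral_radius m n A)
       \<and> (\<forall>B\<in>S_set k n. Min (ratio m k n A B ` {..<n}) \<le> spectral_radius m n A)
       \<and> (\<exists>B\<in>S_set k n. Max (ratio m k n A B ` {..<n}) = spectral_radius m n A)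
       \<and> (\<forall>B\<in>S_set k n. spectral_radius m n A \<le> Max (ratio m k n A B ` {..<n}))"
proof -
  have m: "1 \<le> m"
    using assms(1) by simp
  obtain lam u where u: "0 \<le> lam" "\<And>i. i < n \<Longrightarrow> 0 < u i"
      "\<And>i. i < n \<Longrightarrow> tensor_apply m n A u i = lam * u i ^ (m - 1)"
    using ex_positive_eigenvector[OF assms(1,2,4,5)] by blast
  have rho: "spectral_radius m n A = lam"
    by (rule spectral_radius_eq_eigenvalue[of m n A lam u, OF assms(4) m assms(2) u])
  obtain B0 where B0: "B0 \<in> S_set k n" "\<forall>i<n. row_sum k n B0 i = u i"
    using ex_S_set_row_sum[of k n u, OF assms(3,2) u(2)] by blast
  have "min_quotient m n A (row_sum k n B0) = lam" "max_quotient m n A (row_sum k n B0) = lam"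
    using B0(2) u(2,3) tensor_apply_cong[of n "row_sum k n B0" u m A]
    by (intro min_max_quotient_eigenvector[OF assms(2)]; simp)+
  moreover have "min_quotient m n A (row_sum k n B) \<le> lam" "lam \<le> max_quotient m n A (row_sum k n B)"
    if "B \<in> S_set k n" for B
    using row_sum_pos_if_S_set[OF that]
    by (intro min_quotient_le_eigenvalue[of m n A u lam, OF assms(4) m assms(2) u(2,3)]
        eigenvalue_le_max_quotient[of m n A u lam, OF assms(4) m assms(2) u(2,3)]; simp)+
  ultimately show ?thesis
    using B0(1) Min_Max_ratio[OF m assms(3,4)] rho by metis
qed

end
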